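(* Let $\mathcal{X}=\mathbb{R}^{m\times n}_{\le r}$, $\mathcal{M}=\{(X,\mathcal{S})\in\mathbb{R}^{m\times n}\times\mathrm{Gr}(n,n-r): \mathcal{S}\subseteq\ker X\}$ and $\varphi(X,\mathcal{S})=X$. Then $\varphi$ satisfies "local $\Rightarrow$ local" at $(X,\mathcal{S})$ if and only if $\mathrm{rank}(X)=r$; the same holds for "1 $\Rightarrow$ 1"; and $\varphi$ satisfies "2 $\Rightarrow$ 1" at every point of $\mathcal{M}$.
   Context: $\mathbb{R}^{m\times n}_{\le r}$ is the set of $m\times n$ real matrices of rank at most $r$; $\mathrm{Gr}(n,n-r)$ is the Grassmann manifold of $(n-r)$-dimensional linear subspaces of $\mathbb{R}^n$; $\mathcal{M}$ is a smooth manifold (the desingularization). General setting: for $\varphi\colon\mathcal{M}\to\mathcal{E}$ smooth with image $\mathcal{X}$ and a cost $f$, $g=f\circ\varphi$. Tangent cone: $\mathrm{T}_x\mathcal{X}=\{\lim (x_i-x)/\tau_i: x_i\in\mathcal{X},\tau_i>0,\tau_i\to0\}$; $K^*=\{u:\langle u,v\rangle\ge0\ \forall v\in K\}$; $x$ is stationary for $f$ on $\mathcal{X}$ if $\nabla f(x)\in(\mathrm{T}_x\mathcal{X})^*$. $y$ is 1-critical for $g$ if $(g\circ c)'(0)=0$ for all smooth curves $c$ in $\mathcal{M}$ with $c(0)=y$; 2-critical if moreover $(g\circ c)''(0)\ge0$ for all such curves. "local $\Rightarrow$ local" at $y$: for every continuous $f\colon\mathcal{X}\to\mathbb{R}$,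 if $y$ is a local minimum of $g$ then $\varphi(y)$ is a local minimum of $f$ on $\mathcal{X}$. "$k\Rightarrow1$" at $y$ ($k=1,2$): for every $k$-times differentiable $f\colon\mathcal{E}\to\mathbb{R}$, if $y$ is $k$-critical for $g$ then $\varphi(y)$ is stationary for $f$ on $\mathcal{X}$. *)

theory Defs
  imports "HOL-Analysis.Analysis"
begin

definition loc_min_on :: "'a::metric_space set \<Rightarrow> ('a \<Rightarrow> real) \<Rightarrow> 'a \<Rightarrow> bool" where
  "loc_min_on S h x \<longleftrightarrow> x \<in> S \<and> (\<exists>e>0. \<forall>z\<in>S. dist z x < e \<longrightarrow> h x \<le> h z)"

definition smooth_curve_in :: "'a::real_normed_vector set \<Rightarrow> (real \<Rightarrow> 'a) \<Rightarrow> bool" where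
  "smooth_curve_in M c \<longleftrightarrow> (\<forall>t. c t \<in> M) \<and>
     (\<exists>D :: nat \<Rightarrow> real \<Rightarrow> 'a. D 0 = c \<and>
        (\<forall>k t. (D k has_vector_derivative D (Suc k) t) (at t)))"

definition crit1 :: "'a::real_normed_vector set \<Rightarrow> ('a \<Rightarrow> real) \<Rightarrow> 'a \<Rightarrow> bool" where
  "crit1 M g y \<longleftrightarrow> (\<forall>c. smooth_curve_in M c \<and> c 0 = y \<longrightarrow> deriv (g \<circ> c) 0 = 0)"

definition crit2 :: "'a::real_normed_vector set \<Rightarrow> ('a \<Rightarrow> real) \<Rightarrow> 'a \<Rightarrow> bool" where
  "crit2 M g y \<longleftrightarrow> crit1 M g y \<and>
     (\<forall>c. smooth_curve_in M c \<and> c 0 = y \<longrightarrow> deriv (deriv (g \<circ> c)) 0 \<ge> 0)"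

definition tangent_cone :: "'b::real_normed_vector set \<Rightarrow> 'b \<Rightarrow> 'b set" where
  "tangent_cone X x = {v. \<exists>xs \<tau>. (\<forall>i. xs i \<in> X) \<and> (\<forall>i. \<tau> i > 0) \<and> \<tau> \<longlonglongrightarrow> 0 \<and>
       (\<lambda>i. (xs i - x) /\<^sub>R \<tau> i) \<longlonglongrightarrow> v}"

definition dual_cone :: "'b::real_inner set \<Rightarrow> 'b set" where
  "dual_cone K = {u. \<forall>v\<in>K. inner u v \<ge> 0}"

definition grad :: "('b::real_inner \<Rightarrow> real) \<Rightarrow> 'b \<Rightarrow> 'b" where
  "grad f x = (THE G. (f has_derivative (\<lambda>v. inner G v)) (at x))"

definition stationary_on :: "'b::real_inner set \<Rightarrow> ('b \<Rightarrow> real) \<Rightarrow> 'b \<Rightarrow> bool" where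
  "stationary_on X f x \<longleftrightarrow> grad f x \<in> dual_cone (tangent_cone X x)"

definition twice_differentiable :: "('b::real_normed_vector \<Rightarrow> real) \<Rightarrow> bool" where
  "twice_differentiable f \<longleftrightarrow> (\<exists>Df :: 'b \<Rightarrow> 'b \<Rightarrow>\<^sub>L real.
      (\<forall>x. (f has_derivative blinfun_apply (Df x)) (at x)) \<and> (\<forall>x. Df differentiable at x))"

definition local_to_local ::
  "'a::metric_space set \<Rightarrow> ('a \<Rightarrow> 'b::metric_space) \<Rightarrow> 'b set \<Rightarrow> 'a \<Rightarrow> bool" where
  "local_to_local M \<phi> X y \<longleftrightarrow>
     (\<forall>f::'b \<Rightarrow> real. continuous_on X f \<longrightarrow> loc_min_on M (f \<circ> \<phi>) y \<longrightarrow> loc_min_on X f (\<phi> y))"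

definition one_to_one ::
  "'a::real_normed_vector set \<Rightarrow> ('a \<Rightarrow> 'b::real_inner) \<Rightarrow> 'b set \<Rightarrow> 'a \<Rightarrow> bool" where
  "one_to_one M \<phi> X y \<longleftrightarrow>
     (\<forall>f::'b \<Rightarrow> real. (\<forall>x. f differentiable (at x)) \<longrightarrow> crit1 M (f \<circ> \<phi>) y \<longrightarrow> stationary_on X f (\<phi> y))"

definition two_to_one ::
  "'a::real_normed_vector set \<Rightarrow> ('a \<Rightarrow> 'b::real_inner) \<Rightarrow> 'b set \<Rightarrow> 'a \<Rightarrow> bool" where
  "two_to_one M \<phi> X y \<longleftrightarrow>
     (\<forall>f::'b \<Rightarrow> real. twice_differentiable f \<longrightarrow> crit2 M (f \<circ> \<phi>) y \<longrightarrow> stationary_on X f (\<phi> y))"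

definition low_rank :: "nat \<Rightarrow> (real^'n^'m) set" where
  "low_rank r = {X. rank X \<le> r}"

text \<open>Gr(n,k) realised (as a smooth manifold, diffeomorphically) as the set of orthogonal
  projectors of rank k; the subspace S corresponds to the projector P with range P = S.\<close>
definition grass_proj :: "nat \<Rightarrow> (real^'n^'n) set" where
  "grass_proj k = {P. transpose P = P \<and> P ** P = P \<and> rank P = k}"

text \<open>M = {(X,S) : S subset of ker X}; with S = range P this is X ** P = 0.\<close>
definition desing :: "nat \<Rightarrow> ((real^'n^'m) \<times> (real^'n^'n)) set" where
  "desing r = {(X, P). P \<in> grass_proj (CARD('n) - r) \<and> X ** P = 0}"

end

theory Submission
  imports Defs
begin

text \<open>
  Write a point of the desingularization as (X, P), P the orthogonal projector onto an
  (n - r)-dimensional subspace of ker X.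

  If rank X = r, then P is the projector onto ker X. By compactness of the Grassmannian,
  every matrix of rank at most r near X therefore lifts to a point near (X, P); this
  transfers local minima, and it shows that every tangent direction W of the bounded-rank
  matrices at X maps range P into range X. Two families of smooth curves through (X, P),
  translating X by matrices V with V P = 0 and rotating range P towards ker P, force the
  gradient G at a 1-critical point to satisfy G P = G and x \<bullet> G a = 0 for x in range X
  and a in range P; hence G is orthogonal to the tangent cone.

  If rank X < r, take unit vectors u orthogonal to range X and v in range P. On the
  desingularization, u \<bullet> (Y - X) v = u \<bullet> (Y - X) (P - Q) v is a product of two
  increments, so the functions u \<bullet> (Y - X) v and |Y - X| / 2 - u \<bullet> (Y - X) v are
  1-critical, respectively locally minimal, at (X, P), although X + t outer u v has rank at
  most r. Second-order criticality rules this out: rotating range P towards a common null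
  vector of X and P shows that G also vanishes on range P, so G = 0.
\<close>

section \<open>Rank-one matrices and matrix norms\<close>

definition outer :: "real^'m \<Rightarrow> real^'n \<Rightarrow> real^'n^'m" where
  "outer u v = (\<chi> i j. u$i * v$j)"

lemma outer_mv [simp]: "outer u v *v x = (v \<bullet> x) *\<^sub>R u"
  by (simp add: outer_def matrix_vector_mult_def inner_vec_def vec_eq_iff sum_distrib_left mult_ac)

lemma inner_outer: "inner (A::real^'n^'m) (outer u v) = u \<bullet> (A *v v)"
  by (simp add: outer_def inner_vec_def matrix_vector_mult_def sum_distrib_left mult_ac)

lemma outer_add_left: "outer (u + u') v = outer u v + outer u' v"
  and outer_add_right: "outer u (v + v') = outer u v + outer u v'"
  and outer_diff_left: "outer (u - u') v = outer u v - outer u' v"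
  and outer_diff_right: "outer u (v - v') = outer u v - outer u v'"
  and outer_scaleR_left: "outer (c *\<^sub>R u) v = c *\<^sub>R outer u v"
  and outer_scaleR_right: "outer u (c *\<^sub>R v) = c *\<^sub>R outer u v"
  and outer_minus_left: "outer (- u) v = - outer u v"
  and outer_zero_left [simp]: "outer 0 v = 0"
  by (simp_all add: outer_def vec_eq_iff algebra_simps)

lemmas outer_simps = outer_add_left outer_add_right outer_diff_left outer_diff_right
  outer_scaleR_left outer_scaleR_right outer_minus_left

lemma inner_outer_outer: "inner (outer u v) (outer u' v') = (u \<bullet> u') * (v \<bullet> v')"
  by (simp add: inner_outer algebra_simps inner_commute)

lemma norm_outer: "norm (outer u v) = norm u * norm v"
proof -
  have "norm (outer u v) ^ 2 = (norm u * norm v) ^ 2"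
    by (simp add: power2_norm_eq_inner inner_outer_outer power_mult_distrib)
  then show ?thesis by (simp add: power2_eq_iff_nonneg)
qed

lemma transpose_outer: "transpose (outer u v) = outer v u"
  by (simp add: outer_def transpose_def vec_eq_iff mult_ac)

lemma rank_outer_le: "rank (outer u v) \<le> 1"
proof -
  have "range (\<lambda>x. outer u v *v x) \<subseteq> span {u}" by (auto simp: span_base span_scale)
  then have "rank (outer u v) \<le> card {u}" unfolding rank_dim_range by (rule dim_le_card) auto
  then show ?thesis by simp
qed

lemma norm_matrix_vector_mult_le: "norm (A *v x) \<le> norm (A::real^'n^'m) * norm x"
proof -
  have "norm (A *v x) = L2_set (\<lambda>i. norm ((A *v x) $ i)) UNIV" by (simp add: norm_vec_def)
  also have "\<dots> \<le> L2_set (\<lambda>i. norm (A $ i) * norm x) UNIV"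
  proof (rule L2_set_mono)
    fix i
    have "(A *v x) $ i = A $ i \<bullet> x" by (simp add: matrix_vector_mult_def inner_vec_def mult_ac)
    then show "norm ((A *v x) $ i) \<le> norm (A $ i) * norm x" by (simp add: Cauchy_Schwarz_ineq2)
  qed simp
  also have "\<dots> = norm A * norm x"
    by (simp add: norm_vec_def L2_set_left_distrib)
  finally show ?thesis .
qed

lemma abs_inner_mv_mv_le:
  fixes A :: "real^'n^'m" and B :: "real^'k^'n"
  shows "\<bar>u \<bullet> (A *v (B *v v))\<bar> \<le> norm u * (norm A * (norm B * norm v))"
proof -
  have "\<bar>u \<bullet> (A *v (B *v v))\<bar> \<le> norm u * norm (A *v (B *v v))" by (rule Cauchy_Schwarz_ineq2)
  also have "\<dots> \<le> norm u * (norm A * norm (B *v v))"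
    by (intro mult_left_mono norm_matrix_vector_mult_le norm_ge_zero)
  also have "\<dots> \<le> norm u * (norm A * (norm B * norm v))"
    by (intro mult_left_mono norm_matrix_vector_mult_le norm_ge_zero)
  finally show ?thesis .
qed

lemma bounded_bilinear_matrix_vector_mult:
  "bounded_bilinear (\<lambda>(A::real^'n^'m) (x::real^'n). A *v x)"
proof (rule bounded_bilinear.intro)
  show "\<exists>K. \<forall>(A::real^'n^'m) x. norm (A *v x) \<le> norm A * norm x * K"
    by (rule exI[of _ 1]) (simp add: norm_matrix_vector_mult_le)
qed (simp_all add: algebra_simps vec_eq_iff matrix_vector_mult_def sum_distrib_left sum.distrib)

lemma bounded_bilinear_matrix_matrix_mult:
  "bounded_bilinear (\<lambda>(A::real^'n^'m) (B::real^'k^'n). A ** B)"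
  unfolding bilinear_conv_bounded_bilinear[symmetric] bilinear_def
  by (auto intro!: linearI simp: matrix_add_ldistrib matrix_scalar_ac scalar_matrix_assoc[symmetric]
      vec_eq_iff matrix_matrix_mult_def sum.distrib sum_distrib_left algebra_simps)

lemma bounded_bilinear_inner_mv_mv:
  "bounded_bilinear (\<lambda>(A::real^'n^'m) (B::real^'k^'n). u \<bullet> (A *v (B *v v)))"
  unfolding bilinear_conv_bounded_bilinear[symmetric] bilinear_def
  by (auto intro!: linearI simp: matrix_vector_mult_add_rdistrib matrix_vector_right_distrib
      inner_add_right scaleR_matrix_vector_assoc[symmetric] matrix_vector_mult_scaleR)

lemma bounded_linear_transpose: "bounded_linear (transpose :: real^'n^'m \<Rightarrow> real^'m^'n)"
  unfolding linear_conv_bounded_linear[symmetric]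
  by (rule linearI) (simp_all add: transpose_def vec_eq_iff)

lemma transpose_add: "transpose (A + B) = transpose A + transpose (B::real^'n^'m)"
  and transpose_diff: "transpose (A - B) = transpose A - transpose (B::real^'n^'m)"
  by (simp_all add: transpose_def vec_eq_iff)

lemma inner_matrix_mult_transpose:
  fixes A :: "real^'k^'m" and B :: "real^'n^'k"
  shows "inner (A ** B) C = inner A (C ** transpose B)"
  unfolding inner_vec_def matrix_matrix_mult_def transpose_def
  by (simp add: sum_distrib_left sum_distrib_right mult_ac sum.swap[where A = "UNIV :: 'k set"])

lemma inner_matrix_columns:
  fixes A B :: "real^'n^'m"
  shows "inner A B = (\<Sum>j\<in>UNIV. (A *v axis j 1) \<bullet> (B *v axis j 1))"
  unfolding matrix_vector_mult_basis column_def inner_vec_def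
  by (simp add: sum.swap[where A = "UNIV :: 'm set"])

section \<open>Rank\<close>

lemma subspace_null_space: "subspace {x. (A::real^'n^'m) *v x = 0}"
  by (simp add: subspace_def matrix_vector_right_distrib matrix_vector_mult_scaleR)

lemma subspace_range_matrix_vector_mult: "subspace (range (\<lambda>x. (A::real^'n^'m) *v x))"
  using linear_subspace_image[OF bounded_linear.linear[OF matrix_vector_mul_bounded_linear]
      subspace_UNIV] by simp

lemma rank_nullity: "dim {x. (A::real^'n^'m) *v x = 0} + rank A = CARD('n)"
proof -
  let ?R = "range (\<lambda>z. transpose A *v z)"
  have "{x. A *v x = 0} = {y \<in> UNIV. \<forall>x \<in> ?R. orthogonal x y}"
    by (auto simp: orthogonal_def dot_lmul_matrix) (metis inner_eq_zero_iff)
  moreover have "dim {y \<in> UNIV. \<forall>x \<in> ?R. orthogonal x y} + dim ?R = dim (UNIV :: (real^'n) set)"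
    by (rule dim_subspace_orthogonal_to_vectors[OF subspace_range_matrix_vector_mult]) simp_all
  moreover have "dim ?R = rank A" by (metis rank_dim_range rank_transpose)
  ultimately show ?thesis by simp
qed

lemma rank_add_le: "rank ((A::real^'n^'m) + B) \<le> rank A + rank B"
proof -
  let ?RA = "range (\<lambda>x. A *v x)" and ?RB = "range (\<lambda>x. B *v x)"
  have "range (\<lambda>x. (A + B) *v x) \<subseteq> {x + y |x y. x \<in> ?RA \<and> y \<in> ?RB}"
    by (auto simp: matrix_vector_mult_add_rdistrib)
  then have "rank (A + B) \<le> dim {x + y |x y. x \<in> ?RA \<and> y \<in> ?RB}"
    unfolding rank_dim_range by (rule dim_subset)
  also have "\<dots> \<le> dim ?RA + dim ?RB"
    using dim_sums_Int[OF subspace_range_matrix_vector_mult subspace_range_matrix_vector_mult,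
        of A B]
    by linarith
  finally show ?thesis by (simp add: rank_dim_range)
qed

lemma dim_le_rank_of_inj_on:
  assumes "subspace S" and "\<And>x. x \<in> S \<Longrightarrow> (B::real^'n^'m) *v x = 0 \<Longrightarrow> x = 0"
  shows "dim S \<le> rank B"
proof -
  have "inj_on (\<lambda>x. B *v x) (span S)"
  proof (rule inj_onI)
    fix x y assume "x \<in> span S" "y \<in> span S" "B *v x = B *v y"
    moreover have "span S = S" using assms(1) by (simp add: span_eq_iff)
    ultimately have "x - y \<in> S" "B *v (x - y) = 0"
      using assms(1) by (auto simp: matrix_vector_mult_diff_distrib subspace_diff)
    then have "x - y = 0" by (rule assms(2))
    then show "x = y" by simp
  qed
  then have "dim ((\<lambda>x. B *v x) ` S) = dim S"
    by (rule dim_image_eq[OF bounded_linear.linear[OF matrix_vector_mul_bounded_linear]])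
  moreover have "dim ((\<lambda>x. B *v x) ` S) \<le> rank B"
    unfolding rank_dim_range by (rule dim_subset) auto
  ultimately show ?thesis by simp
qed

lemma rank_lower_semicontinuous:
  fixes A :: "real^'n^'m"
  shows "\<exists>d>0. \<forall>B. norm (B - A) < d \<longrightarrow> rank A \<le> rank B"
proof -
  let ?S = "span (rows A)"
  obtain c where c: "c > 0" "\<forall>x\<in>?S. c * norm x \<le> norm (A *v x)"
    using injective_imp_isometric[OF closed_span subspace_span matrix_vector_mul_bounded_linear]
      nullspace_inter_rowspace[of A] by blast
  have "rank A \<le> rank B" if B: "norm (B - A) < c" for B
  proof -
    have "x = 0" if "x \<in> ?S" "B *v x = 0" for x
    proof -
      have "c * norm x \<le> norm ((A - B) *v x)"
        using c that by (simp add: matrix_vector_mult_diff_rdistrib)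
      also have "\<dots> \<le> norm (B - A) * norm x"
        using norm_matrix_vector_mult_le[of "A - B" x] by (simp add: norm_minus_commute)
      finally have "(c - norm (B - A)) * norm x \<le> 0" by (simp add: algebra_simps)
      then show "x = 0" using B by (simp add: mult_le_0_iff)
    qed
    then have "dim ?S \<le> rank B" by (rule dim_le_rank_of_inj_on[OF subspace_span])
    then show ?thesis by (simp add: row_rank_def)
  qed
  with c show ?thesis by blast
qed

lemma closed_low_rank: "closed (low_rank r)"
proof -
  have "open {A::real^'n^'m. r < rank A}"
    unfolding open_dist
  proof (intro ballI)
    fix A :: "real^'n^'m" assume "A \<in> {A. r < rank A}"
    moreover obtain d where "d > 0" "\<forall>B. norm (B - A) < d \<longrightarrow> rank A \<le> rank B"
      using rank_lower_semicontinuous by blast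
    ultimately show "\<exists>e>0. \<forall>B. dist B A < e \<longrightarrow> B \<in> {A. r < rank A}"
      by (auto simp: dist_norm intro: order.strict_trans2)
  qed
  then show ?thesis by (simp add: low_rank_def closed_def Compl_eq not_le)
qed

lemma exists_unit_in_subspace:
  fixes S :: "'a::euclidean_space set"
  assumes "subspace S" and "0 < dim S"
  shows "\<exists>x\<in>S. norm x = 1"
proof -
  have "\<not> S \<subseteq> {0}" using assms(2) by (metis eucl.dim_eq_0 less_irrefl)
  then obtain x where x: "x \<in> S" "x \<noteq> 0" by blast
  then have "(1 / norm x) *\<^sub>R x \<in> S" using assms(1) by (simp add: subspace_scale)
  moreover have "norm ((1 / norm x) *\<^sub>R x) = 1" using x by simp
  ultimately show ?thesis by blast
qed

lemma exists_unit_left_null_vector: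
  assumes "rank (X::real^'n^'m) < CARD('m)"
  shows "\<exists>u. norm u = 1 \<and> u v* X = 0"
proof -
  have "0 < dim {u. transpose X *v u = 0}"
    using rank_nullity[of "transpose X"] rank_transpose[of X] assms by linarith
  then obtain u where "u \<in> {u. transpose X *v u = 0}" "norm u = 1"
    using exists_unit_in_subspace[OF subspace_null_space[of "transpose X"]] by blast
  then show ?thesis by auto
qed

section \<open>Orthogonal projectors\<close>

lemma grass_projD:
  assumes "P \<in> grass_proj k"
  shows "transpose P = P" "P ** P = P" "rank P = k"
  using assms by (auto simp: grass_proj_def)

lemma idempotent_mv: "P ** P = P \<Longrightarrow> P *v (P *v x) = P *v x"
  by (simp add: matrix_vector_mul_assoc)

lemma symmetric_inner_mv: "transpose P = P \<Longrightarrow> (P *v x) \<bullet> y = x \<bullet> (P *v (y::real^'n))"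
  by (metis dot_lmul_matrix inner_commute transpose_matrix_vector)

lemma subspace_fixed_space: "subspace {x. (P::real^'n^'n) *v x = x}"
  by (simp add: subspace_def matrix_vector_right_distrib matrix_vector_mult_scaleR)

lemma range_idempotent: "P ** P = P \<Longrightarrow> range (\<lambda>x. P *v x) = {x. P *v x = x}"
  by (auto simp: idempotent_mv) (metis rangeI)

lemma dim_fixed_space_grass_proj:
  assumes "P \<in> grass_proj k"
  shows "dim {x. P *v x = x} = k"
proof -
  have "{x. P *v x = x} = range (\<lambda>x. P *v x)"
    using range_idempotent[OF grass_projD(2)[OF assms]] by simp
  then show ?thesis using rank_dim_range[of P] grass_projD(3)[OF assms] by simp
qed

lemma exists_unit_fixed_vector:
  assumes "P \<in> grass_proj k" and "0 < k"
  shows "\<exists>v. norm v = 1 \<and> P *v v = v"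
  using exists_unit_in_subspace[OF subspace_fixed_space]
    dim_fixed_space_grass_proj[OF assms(1)] assms(2)
  by auto

lemma rank_idempotent_complement:
  fixes P :: "real^'n^'n"
  assumes "P ** P = P"
  shows "rank (mat 1 - P) + rank P = CARD('n)"
proof -
  have "range (\<lambda>x. (mat 1 - P) *v x) = {x. P *v x = 0}"
  proof (intro set_eqI iffI)
    fix y assume "y \<in> range (\<lambda>x. (mat 1 - P) *v x)"
    then show "y \<in> {x. P *v x = 0}"
      using idempotent_mv[OF assms] by (auto simp: matrix_vector_mult_diff_rdistrib
          matrix_vector_mult_diff_distrib)
  next
    fix y assume "y \<in> {x. P *v x = 0}"
    then have "y = (mat 1 - P) *v y" by (simp add: matrix_vector_mult_diff_rdistrib)
    then show "y \<in> range (\<lambda>x. (mat 1 - P) *v x)" by (rule range_eqI)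
  qed
  then show ?thesis using rank_nullity[of P] by (simp add: rank_dim_range)
qed

lemma grass_proj_eqI:
  assumes "P \<in> grass_proj k" and "Q \<in> grass_proj l"
    and "{x. P *v x = x} = {x. Q *v x = x}"
  shows "P = Q"
proof -
  have "Q *v (P *v x) = P *v x" "P *v (Q *v x) = Q *v x" for x
    using assms(3) idempotent_mv[OF grass_projD(2)[OF assms(1)], of x]
      idempotent_mv[OF grass_projD(2)[OF assms(2)], of x] by blast+
  then have QP: "Q ** P = P" and PQ: "P ** Q = Q"
    by (simp_all add: matrix_eq matrix_vector_mul_assoc)
  have "P = transpose (Q ** P)" using QP grass_projD(1)[OF assms(1)] by simp
  also have "\<dots> = Q"
    using PQ grass_projD(1)[OF assms(1)] grass_projD(1)[OF assms(2)]
    by (simp add: matrix_transpose_mul)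
  finally show ?thesis .
qed

lemma grass_proj_add_line:
  assumes Q: "Q \<in> grass_proj k" and Qy: "Q *v y = 0" and y: "norm y = 1"
  shows "Q + outer y y \<in> grass_proj (Suc k)"
proof -
  let ?R = "Q + outer y y"
  have Qs: "transpose Q = Q" and Qi: "Q ** Q = Q" and Qr: "rank Q = k"
    using grass_projD[OF Q] by auto
  have yy: "y \<bullet> y = 1" using y by (simp add: dot_square_norm)
  have yQ: "y \<bullet> (Q *v x) = 0" for x using symmetric_inner_mv[OF Qs, of y x] Qy by simp
  have Rx: "?R *v x = Q *v x + (y \<bullet> x) *\<^sub>R y" for x by (simp add: matrix_vector_mult_add_rdistrib)
  have "transpose ?R = ?R"
    by (simp add: Qs transpose_outer transpose_add)
  moreover have "?R ** ?R = ?R"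
    by (simp add: matrix_eq matrix_vector_mul_assoc[symmetric] Rx idempotent_mv[OF Qi] Qy yQ yy
        matrix_vector_right_distrib matrix_vector_mult_scaleR inner_add_right)
  moreover have "rank ?R = Suc k"
  proof -
    let ?S = "span (insert y (range (\<lambda>x. Q *v x)))"
    have "range (\<lambda>x. ?R *v x) = ?S"
    proof
      have "?R *v x \<in> ?S" for x
        unfolding Rx by (intro span_add span_scale span_base) auto
      then show "range (\<lambda>x. ?R *v x) \<subseteq> ?S" by blast
      have "y = ?R *v y" "Q *v x = ?R *v (Q *v x)" for x
        by (simp_all add: Rx Qy yy yQ idempotent_mv[OF Qi])
      then show "?S \<subseteq> range (\<lambda>x. ?R *v x)"
        by (intro span_minimal[OF _ subspace_range_matrix_vector_mult]) (auto intro: range_eqI)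
    qed
    moreover have "y \<notin> span (range (\<lambda>x. Q *v x))"
    proof
      assume "y \<in> span (range (\<lambda>x. Q *v x))"
      then obtain x where "y = Q *v x"
        using span_eq_iff[THEN iffD2, OF subspace_range_matrix_vector_mult] by blast
      then show False using yQ[of x] yy by simp
    qed
    ultimately show ?thesis using Qr by (simp add: rank_dim_range dim_insert)
  qed
  ultimately show ?thesis by (simp add: grass_proj_def)
qed

lemma grass_proj_remove_line:
  assumes P: "P \<in> grass_proj k" and Pa: "P *v a = a" and a: "norm a = 1"
  shows "P - outer a a \<in> grass_proj (k - 1)" and "0 < k"
proof -
  let ?Q = "P - outer a a"
  have Ps: "transpose P = P" and Pi: "P ** P = P" using grass_projD[OF P] by auto
  have aa: "a \<bullet> a = 1" using a by (simp add: dot_square_norm)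
  have aP: "a \<bullet> (P *v x) = a \<bullet> x" for x using symmetric_inner_mv[OF Ps, of a x] Pa by simp
  have Qx: "?Q *v x = P *v x - (a \<bullet> x) *\<^sub>R a" for x by (simp add: matrix_vector_mult_diff_rdistrib)
  have "transpose ?Q = ?Q"
    by (simp add: Ps transpose_outer transpose_diff)
  moreover have "?Q ** ?Q = ?Q"
    by (simp add: matrix_eq matrix_vector_mul_assoc[symmetric] Qx idempotent_mv[OF Pi] Pa aP aa
        matrix_vector_mult_diff_distrib matrix_vector_mult_scaleR inner_diff_right)
  ultimately have "?Q \<in> grass_proj (rank ?Q)" by (simp add: grass_proj_def)
  moreover have "?Q *v a = 0" by (simp add: Qx Pa aa)
  ultimately have "?Q + outer a a \<in> grass_proj (Suc (rank ?Q))"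
    using a by (rule grass_proj_add_line)
  then have "k = Suc (rank ?Q)" using grass_projD(3)[OF P] by (simp add: grass_proj_def)
  then show "?Q \<in> grass_proj (k - 1)" "0 < k" using \<open>?Q \<in> grass_proj (rank ?Q)\<close> by simp_all
qed

lemma exists_grass_proj_in_subspace:
  assumes "subspace S" and "k \<le> dim S"
  shows "\<exists>Q \<in> grass_proj k. \<forall>x. (Q::real^'n^'n) *v x \<in> S"
  using assms(2)
proof (induction k)
  case 0
  have "(0::real^'n^'n) \<in> grass_proj 0" by (simp add: grass_proj_def transpose_def vec_eq_iff)
  then show ?case using assms(1) by (intro bexI[of _ 0]) (simp_all add: subspace_0)
next
  case (Suc k)
  then obtain Q where Q: "Q \<in> grass_proj k" "\<forall>x. Q *v x \<in> S" by auto
  have "\<not> S \<subseteq> {x. Q *v x = x}"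
    using dim_subset[of S "{x. Q *v x = x}"] dim_fixed_space_grass_proj[OF Q(1)] Suc.prems by auto
  then obtain s where s: "s \<in> S" "Q *v s \<noteq> s" by auto
  define y0 where "y0 = s - Q *v s"
  have y0: "y0 \<in> S" "Q *v y0 = 0" "y0 \<noteq> 0"
    using s Q(2) assms(1) idempotent_mv[OF grass_projD(2)[OF Q(1)]]
    by (auto simp: y0_def subspace_diff matrix_vector_mult_diff_distrib)
  define y where "y = (1 / norm y0) *\<^sub>R y0"
  have y: "y \<in> S" "Q *v y = 0" "norm y = 1"
    using y0 assms(1) by (simp_all add: y_def subspace_scale matrix_vector_mult_scaleR)
  have "Q + outer y y \<in> grass_proj (Suc k)" using grass_proj_add_line[OF Q(1) y(2,3)] .
  moreover have "(Q + outer y y) *v x \<in> S" for x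
    using Q(2) y(1) assms(1) by (simp add: matrix_vector_mult_add_rdistrib subspace_add
        subspace_scale)
  ultimately show ?case by blast
qed

lemma bounded_grass_proj: "bounded (grass_proj k :: (real^'n^'n) set)"
proof -
  have "norm P \<le> sqrt (real CARD('n))" if P: "P \<in> grass_proj k" for P :: "real^'n^'n"
  proof -
    have Ps: "transpose P = P" and Pi: "P ** P = P" using grass_projD[OF P] by auto
    have contraction: "norm (P *v x) \<le> norm x" for x
    proof -
      have "norm (P *v x) ^ 2 = x \<bullet> (P *v x)"
        by (simp add: power2_norm_eq_inner symmetric_inner_mv[OF Ps] idempotent_mv[OF Pi])
      also have "\<dots> \<le> norm x * norm (P *v x)" by (rule order_trans[OF abs_ge_self
          Cauchy_Schwarz_ineq2])
      finally have "norm (P *v x) * norm (P *v x) \<le> norm x * norm (P *v x)"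
        by (simp add: power2_eq_square)
      then show ?thesis by (cases "norm (P *v x) = 0") (auto simp: mult_le_cancel_right)
    qed
    have "(P *v axis j 1) \<bullet> (P *v axis j 1) \<le> 1" for j :: 'n
      using contraction[of "axis j 1"]
      by (simp add: dot_square_norm power_le_one)
    then have "norm P ^ 2 \<le> (\<Sum>j\<in>(UNIV::'n set). 1)"
      unfolding power2_norm_eq_inner inner_matrix_columns[of P P] by (rule sum_mono)
    then show ?thesis by (simp add: real_le_rsqrt)
  qed
  then show ?thesis unfolding bounded_iff by blast
qed

lemma closed_grass_proj: "closed (grass_proj k :: (real^'n^'n) set)"
  unfolding closed_sequential_limits
proof (intro allI impI, elim conjE)
  fix Q :: "nat \<Rightarrow> real^'n^'n" and L
  assume Q: "\<forall>j. Q j \<in> grass_proj k" and lim: "Q \<longlonglongrightarrow> L"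
  have "(\<lambda>j. transpose (Q j)) \<longlonglongrightarrow> transpose L"
    using bounded_linear.tendsto[OF bounded_linear_transpose lim] .
  moreover have "(\<lambda>j. transpose (Q j)) = Q" using Q grass_projD(1) by auto
  ultimately have sym: "transpose L = L" using lim LIMSEQ_unique by metis
  have "(\<lambda>j. Q j ** Q j) \<longlonglongrightarrow> L ** L"
    using bounded_bilinear.tendsto[OF bounded_bilinear_matrix_matrix_mult lim lim] .
  moreover have "(\<lambda>j. Q j ** Q j) = Q" using Q grass_projD(2) by auto
  ultimately have idem: "L ** L = L" using lim LIMSEQ_unique by metis
  have "L \<in> low_rank k"
    by (rule closed_sequentially[OF closed_low_rank _ lim])
      (use Q grass_projD(3) in \<open>force simp: low_rank_def\<close>)
  moreover have "mat 1 - L \<in> low_rank (CARD('n) - k)"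
  proof -
    have "rank (mat 1 - Q j) + k = CARD('n)" for j
      using rank_idempotent_complement[OF grass_projD(2)] grass_projD(3) Q by metis
    then have "mat 1 - Q j \<in> low_rank (CARD('n) - k)" for j
      by (simp add: low_rank_def) (metis add_diff_cancel_right' order_refl)
    moreover have "(\<lambda>j. mat 1 - Q j) \<longlonglongrightarrow> mat 1 - L" by (intro tendsto_intros lim)
    ultimately show ?thesis by (rule closed_sequentially[OF closed_low_rank])
  qed
  moreover have "k \<le> CARD('n)" using rank_bound[of "Q 0"] grass_projD(3) Q by fastforce
  ultimately have "rank L = k" using rank_idempotent_complement[OF idem] by (simp add: low_rank_def)
  then show "L \<in> grass_proj k" using sym idem by (simp add: grass_proj_def)
qed

lemma compact_grass_proj: "compact (grass_proj k :: (real^'n^'n) set)"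
  by (simp add: compact_eq_bounded_closed bounded_grass_proj closed_grass_proj)

lemma inner_eq_zero_through_proj:
  fixes G W :: "real^'n^'m"
  assumes "transpose P = P" and "P ** P = P" and "G ** P = G"
    and "\<And>a. P *v a = a \<Longrightarrow> (G *v a) \<bullet> (W *v a) = 0"
  shows "inner G W = 0"
proof -
  have "inner G W = inner (G ** P) (W ** P)"
    using assms(1-3) inner_matrix_mult_transpose[of G P W] by (metis matrix_mul_assoc)
  also have "\<dots> = (\<Sum>j\<in>UNIV. (G *v (P *v axis j 1)) \<bullet> (W *v (P *v axis j 1)))"
    by (simp add: inner_matrix_columns matrix_vector_mul_assoc)
  also have "\<dots> = 0" using assms(4) idempotent_mv[OF assms(2)] by simp
  finally show ?thesis .
qed

section \<open>The desingularization\<close>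

lemma desing_iff:
  "(X, P) \<in> desing r \<longleftrightarrow> P \<in> grass_proj (CARD('n) - r) \<and> (\<forall>x. X *v (P *v x) = 0)"
  for X :: "real^'n^'m"
  by (simp add: desing_def matrix_eq matrix_vector_mul_assoc)

lemma closed_desing: "closed (desing r :: ((real^'n^'m) \<times> (real^'n^'n)) set)"
proof -
  have "desing r = (UNIV \<times> (grass_proj (CARD('n) - r) :: (real^'n^'n) set))
      \<inter> {z::(real^'n^'m) \<times> (real^'n^'n). fst z ** snd z = 0}"
    by (auto simp: desing_def)
  moreover have "continuous_on UNIV (\<lambda>z::(real^'n^'m) \<times> (real^'n^'n). fst z ** snd z)"
    by (intro bounded_bilinear.continuous_on[OF bounded_bilinear_matrix_matrix_mult]
        continuous_intros)
  ultimately show ?thesis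
    by (simp add: closed_Int closed_Times closed_grass_proj closed_Collect_eq)
qed

lemma desing_fixed_space_null:
  assumes "(X, P) \<in> desing r" and "P *v x = x"
  shows "X *v x = 0"
  using assms desing_iff by metis

lemma desing_rank_le:
  assumes "(X, P) \<in> desing r" and "r \<le> CARD('n)"
  shows "rank (X::real^'n^'m) \<le> r"
proof -
  have "{x. P *v x = x} \<subseteq> {x. X *v x = 0}" using desing_fixed_space_null[OF assms(1)] by blast
  then have "dim {x. P *v x = x} \<le> dim {x. X *v x = 0}" by (rule dim_subset)
  moreover have "dim {x. P *v x = x} = CARD('n) - r"
    using assms(1) by (simp add: desing_iff dim_fixed_space_grass_proj)
  ultimately show ?thesis using assms(2) rank_nullity[of X] by linarith
qed

lemma desing_null_space_eq:
  assumes "(X, P) \<in> desing r" and "r \<le> CARD('n)" and "rank X = r"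
  shows "{x. (X::real^'n^'m) *v x = 0} = {x. P *v x = x}"
proof -
  have sub: "{x. P *v x = x} \<subseteq> {x. X *v x = 0}" using desing_fixed_space_null[OF assms(1)] by blast
  moreover have "dim {x. P *v x = x} = CARD('n) - r"
    using assms(1) by (simp add: desing_iff dim_fixed_space_grass_proj)
  then have "dim {x. X *v x = 0} \<le> dim {x. P *v x = x}"
    using assms(3) rank_nullity[of X] by linarith
  ultimately show ?thesis
    using subspace_dim_equal[OF subspace_fixed_space subspace_null_space] by blast
qed

lemma desing_unique_proj:
  fixes X :: "real^'n^'m"
  assumes "(X, P) \<in> desing r" and "(X, Q) \<in> desing r" and "r \<le> CARD('n)" and "rank X = r"
  shows "P = Q"
proof (rule grass_proj_eqI)
  show "P \<in> grass_proj (CARD('n) - r)" "Q \<in> grass_proj (CARD('n) - r)"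
    using assms(1,2) by (simp_all add: desing_iff)
  show "{x. P *v x = x} = {x. Q *v x = x}"
    using desing_null_space_eq[OF assms(1,3,4)] desing_null_space_eq[OF assms(2,3,4)] by simp
qed

lemma desing_fiber_nonempty:
  assumes "rank Y \<le> r" and "r \<le> CARD('n)"
  shows "\<exists>Q. (Y::real^'n^'m, Q) \<in> desing r"
proof -
  have "CARD('n) - r \<le> dim {x. Y *v x = 0}" using rank_nullity[of Y] assms by linarith
  then obtain Q where "Q \<in> grass_proj (CARD('n) - r)" "\<forall>x. Q *v x \<in> {x. Y *v x = 0}"
    using exists_grass_proj_in_subspace[OF subspace_null_space] by blast
  then show ?thesis by (auto simp: desing_iff)
qed

lemma exists_common_null_vector:
  fixes X :: "real^'n^'m"
  assumes XP: "(X, P) \<in> desing r" and "r \<le> CARD('n)" and "rank X < r"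
  shows "\<exists>w. w \<noteq> 0 \<and> X *v w = 0 \<and> P *v w = 0"
proof -
  have P: "P \<in> grass_proj (CARD('n) - r)" using XP by (simp add: desing_iff)
  have "\<not> {x. X *v x = 0} \<subseteq> {x. P *v x = x}"
  proof
    assume "{x. X *v x = 0} \<subseteq> {x. P *v x = x}"
    then have "dim {x. X *v x = 0} \<le> dim {x. P *v x = x}" by (rule dim_subset)
    then have "dim {x. X *v x = 0} \<le> CARD('n) - r" by (simp add: dim_fixed_space_grass_proj[OF P])
    then show False using rank_nullity[of X] assms(2,3) by linarith
  qed
  then obtain w0 where w0: "X *v w0 = 0" "P *v w0 \<noteq> w0" by auto
  have "X *v (w0 - P *v w0) = 0"
    using w0(1) XP by (simp add: desing_iff matrix_vector_mult_diff_distrib)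
  moreover have "P *v (w0 - P *v w0) = 0"
    using idempotent_mv[OF grass_projD(2)[OF P]] by (simp add: matrix_vector_mult_diff_distrib)
  moreover have "w0 - P *v w0 \<noteq> 0" using w0(2) by simp
  ultimately show ?thesis by blast
qed

lemma desing_proj_near_full_rank:
  fixes X :: "real^'n^'m"
  assumes XP: "(X, P) \<in> desing r" and r: "r \<le> CARD('n)" "rank X = r" and e: "e > 0"
  shows "\<exists>\<delta>>0. \<forall>Y. rank Y \<le> r \<longrightarrow> dist Y X < \<delta> \<longrightarrow> (\<exists>Q. (Y, Q) \<in> desing r \<and> dist Q P < e)"
proof (rule ccontr)
  \<comment> \<open>compactness of the Grassmannian, and uniqueness of the lift at full rank\<close>
  assume "\<not> ?thesis"
  then have "\<forall>\<delta>>0. \<exists>Y. rank Y \<le> r \<and> dist Y X < \<delta> \<and> (\<forall>Q. (Y, Q) \<in> desing r \<longrightarrow> e \<le> dist Q P)"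
    by (auto simp: not_less) (meson not_le)
  then have "\<exists>Y. rank Y \<le> r \<and> dist Y X < inverse (Suc j) \<and> (\<forall>Q. (Y, Q) \<in> desing r \<longrightarrow> e \<le> dist Q P)"
    for j by simp
  then obtain Y where Y: "\<And>j. rank (Y j) \<le> r" "\<And>j. dist (Y j) X < inverse (Suc j)"
    and far: "\<And>j Q. (Y j, Q) \<in> desing r \<Longrightarrow> e \<le> dist Q P"
    by metis
  obtain Q where Q: "\<And>j. (Y j, Q j) \<in> desing r" using desing_fiber_nonempty[OF Y(1) r(1)] by metis
  obtain L \<sigma> where \<sigma>: "strict_mono \<sigma>" and QL: "(Q \<circ> \<sigma>) \<longlonglongrightarrow> L"
    using compact_imp_seq_compact[OF compact_grass_proj] Q by (metis desing_iff seq_compactE)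
  have "(\<lambda>j. dist (Y j) X) \<longlonglongrightarrow> 0"
    by (rule Lim_null_comparison[OF _ LIMSEQ_inverse_real_of_nat])
      (use Y(2) in \<open>auto intro: always_eventually less_imp_le\<close>)
  then have "Y \<longlonglongrightarrow> X" by (rule tendsto_dist_iff[THEN iffD2])
  then have "(\<lambda>j. (Y (\<sigma> j), Q (\<sigma> j))) \<longlonglongrightarrow> (X, L)"
    using LIMSEQ_subseq_LIMSEQ[OF _ \<sigma>] QL by (intro tendsto_Pair) (auto simp: o_def)
  then have "(X, L) \<in> desing r"
    by (rule closed_sequentially[OF closed_desing, rotated]) (simp add: Q)
  then have "L = P" using desing_unique_proj[OF XP _ r] by simp
  then have "\<forall>\<^sub>F j in sequentially. dist (Q (\<sigma> j)) P < e" using QL e by (auto dest: tendstoD)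
  then show False using far[OF Q] by (auto simp: not_less[symmetric])
qed

text \<open>
  On the desingularization, u \<bullet> (Y - X) v vanishes to second order at (X, P).
\<close>

lemma inner_mv_eq_product_of_increments:
  fixes X Y :: "real^'n^'m" and P Q :: "real^'n^'n"
  assumes "u v* X = 0" and "P *v v = v" and "Y ** Q = 0"
  shows "u \<bullet> ((Y - X) *v v) = u \<bullet> ((Y - X) *v ((P - Q) *v v))"
proof -
  have "u \<bullet> (X *v x) = 0" for x using assms(1) dot_lmul_matrix[of u X x] by simp
  moreover have "Y *v (Q *v v) = 0" using assms(3) by (simp add: matrix_vector_mul_assoc)
  ultimately show ?thesis
    using assms(2) by (simp add: matrix_vector_mult_diff_rdistrib matrix_vector_mult_diff_distrib
        inner_diff_right inner_add_right)
qed

section \<open>Criticality along smooth curves\<close>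

definition trig_curve :: "'a::real_normed_vector \<Rightarrow> 'a \<Rightarrow> 'a \<Rightarrow> 'a \<Rightarrow> real \<Rightarrow> 'a" where
  "trig_curve y U V A t = y + t *\<^sub>R U + sin t *\<^sub>R V + (1 - cos t) *\<^sub>R A"

lemma trig_curve_0 [simp]: "trig_curve y U V A 0 = y"
  by (simp add: trig_curve_def)

lemma has_vector_derivative_scaleR_const:
  "(f has_real_derivative f') (at t) \<Longrightarrow> ((\<lambda>t. f t *\<^sub>R v) has_vector_derivative f' *\<^sub>R v) (at t)"
  using has_vector_derivative_scaleR[OF _ has_vector_derivative_const] by fastforce

lemma has_vector_derivative_trig_curve:
  "(trig_curve y U V A has_vector_derivative U + cos t *\<^sub>R V + sin t *\<^sub>R A) (at t)"
proof -
  have "((\<lambda>t. y + t *\<^sub>R U + sin t *\<^sub>R V + (1 - cos t) *\<^sub>R A) has_vector_derivative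
      0 + 1 *\<^sub>R U + cos t *\<^sub>R V + sin t *\<^sub>R A) (at t)"
    by (intro has_vector_derivative_add has_vector_derivative_const
        has_vector_derivative_scaleR_const)
      (auto intro!: derivative_eq_intros)
  then show ?thesis by (simp add: trig_curve_def[abs_def])
qed

lemma has_vector_derivative_trig_curve_velocity:
  "((\<lambda>t. U + cos t *\<^sub>R V + sin t *\<^sub>R A) has_vector_derivative A) (at 0)"
proof -
  have "((\<lambda>t. U + cos t *\<^sub>R V + sin t *\<^sub>R A) has_vector_derivative
      0 + (- sin 0) *\<^sub>R V + cos 0 *\<^sub>R A) (at 0)"
    by (intro has_vector_derivative_add has_vector_derivative_const
        has_vector_derivative_scaleR_const)
      (auto intro!: derivative_eq_intros)
  then show ?thesis by simp
qed

lemma has_vector_derivative_shifted_trig: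
  "((\<lambda>t. C + sin (t + c) *\<^sub>R V - cos (t + c) *\<^sub>R A) has_vector_derivative
     cos (t + c) *\<^sub>R V + sin (t + c) *\<^sub>R A) (at t)"
proof -
  have "((\<lambda>t. C + sin (t + c) *\<^sub>R V - cos (t + c) *\<^sub>R A) has_vector_derivative
      0 + cos (t + c) *\<^sub>R V - (- sin (t + c)) *\<^sub>R A) (at t)"
    by (intro has_vector_derivative_add has_vector_derivative_diff has_vector_derivative_const
        has_vector_derivative_scaleR_const) (auto intro!: derivative_eq_intros)
  then show ?thesis by simp
qed

lemma smooth_curve_in_trig_curve:
  assumes "\<And>t. trig_curve y U V A t \<in> M"
  shows "smooth_curve_in M (trig_curve y U V A)"
proof -
  \<comment> \<open>the k-th derivative; differentiating sin and cos shifts the phase by pi/2\<close>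
  define D where "D k t = (if k = 0 then trig_curve y U V A t
      else (if k = 1 then U else 0) + sin (t + k * pi / 2) *\<^sub>R V - cos (t + k * pi / 2) *\<^sub>R A)"
    for k :: nat and t
  have "(D k has_vector_derivative D (Suc k) t) (at t)" for k t
  proof (cases "k = 0")
    case True
    then show ?thesis
      using has_vector_derivative_trig_curve[of y U V A t]
      by (simp add: D_def[abs_def] sin_add cos_add)
  next
    case False
    have quarter_turn: "sin (x + pi / 2) = cos x" "cos (x + pi / 2) = - sin x" for x :: real
      by (simp_all add: sin_add cos_add)
    have "t + real (Suc k) * pi / 2 = (t + real k * pi / 2) + pi / 2" by (simp add: field_simps)
    then have "D (Suc k) t = cos (t + k * pi / 2) *\<^sub>R V + sin (t + k * pi / 2) *\<^sub>R A"
      using False by (simp only: D_def quarter_turn) simp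
    moreover have "D k = (\<lambda>t. (if k = 1 then U else 0) + sin (t + k * pi / 2) *\<^sub>R V
        - cos (t + k * pi / 2) *\<^sub>R A)"
      using False by (simp add: D_def[abs_def])
    ultimately show ?thesis by (simp add: has_vector_derivative_shifted_trig)
  qed
  moreover have "D 0 = trig_curve y U V A" by (simp add: D_def[abs_def])
  ultimately show ?thesis using assms unfolding smooth_curve_in_def by blast
qed

lemma crit1_along_curve:
  assumes "crit1 M (f \<circ> \<phi>) y" and "bounded_linear \<phi>" and "smooth_curve_in M c" and "c 0 = y"
    and "(c has_vector_derivative v) (at 0)" and "(f has_derivative L) (at (\<phi> y))"
  shows "L (\<phi> v) = 0"
proof -
  have "((f \<circ> (\<phi> \<circ> c)) has_vector_derivative L (\<phi> v)) (at 0)"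
  proof (rule vector_derivative_diff_chain_within)
    show "((\<phi> \<circ> c) has_vector_derivative \<phi> v) (at 0)"
      using bounded_linear.has_vector_derivative[OF assms(2,5)] by (simp add: o_def)
    show "(f has_derivative L) (at ((\<phi> \<circ> c) 0) within (\<phi> \<circ> c) ` UNIV)"
      using assms(4,6) by (auto intro: has_derivative_at_withinI)
  qed
  then have "((f \<circ> \<phi> \<circ> c) has_field_derivative L (\<phi> v)) (at 0)"
    by (simp add: has_real_derivative_iff_has_vector_derivative o_assoc)
  moreover have "deriv (f \<circ> \<phi> \<circ> c) 0 = 0" using assms(1,3,4) by (simp add: crit1_def)
  ultimately show ?thesis using DERIV_imp_deriv by metis
qed

lemma crit2_along_curve:
  fixes Df :: "'b::real_normed_vector \<Rightarrow> 'b \<Rightarrow>\<^sub>L real"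
  assumes "crit2 M (f \<circ> \<phi>) y" and "bounded_linear \<phi>" and "smooth_curve_in M c" and "c 0 = y"
    and c': "\<And>t. (c has_vector_derivative c' t) (at t)"
    and c'': "(c' has_vector_derivative a) (at 0)"
    and Df: "\<And>x. (f has_derivative blinfun_apply (Df x)) (at x)"
    and DDf: "(Df has_derivative DDf) (at (\<phi> y))"
  shows "0 \<le> blinfun_apply (DDf (\<phi> (c' 0))) (\<phi> (c' 0)) + blinfun_apply (Df (\<phi> y)) (\<phi> a)"
proof -
  define \<gamma> where "\<gamma> = \<phi> \<circ> c"
  have d\<gamma>: "(\<gamma> has_vector_derivative \<phi> (c' t)) (at t)" for t
    using bounded_linear.has_vector_derivative[OF assms(2) c'] by (simp add: \<gamma>_def o_def)
  have d\<gamma>': "((\<lambda>t. \<phi> (c' t)) has_vector_derivative \<phi> a) (at 0)"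
    using bounded_linear.has_vector_derivative[OF assms(2) c''] .
  have \<gamma>0: "\<gamma> 0 = \<phi> y" using assms(4) by (simp add: \<gamma>_def)
  have "((f \<circ> \<gamma>) has_vector_derivative blinfun_apply (Df (\<gamma> t)) (\<phi> (c' t))) (at t)" for t
    by (rule vector_derivative_diff_chain_within[OF d\<gamma>]) (auto intro: has_derivative_at_withinI Df)
  then have "deriv (f \<circ> \<phi> \<circ> c) = (\<lambda>t. blinfun_apply (Df (\<gamma> t)) (\<phi> (c' t)))"
    by (intro ext DERIV_imp_deriv)
      (simp add: has_real_derivative_iff_has_vector_derivative \<gamma>_def o_assoc)
  moreover have "((Df \<circ> \<gamma>) has_vector_derivative DDf (\<phi> (c' 0))) (at 0)"
    by (rule vector_derivative_diff_chain_within[OF d\<gamma>])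
      (use DDf \<gamma>0 in \<open>auto intro: has_derivative_at_withinI\<close>)
  then have "((\<lambda>t. blinfun_apply (Df (\<gamma> t)) (\<phi> (c' t))) has_vector_derivative
      blinfun_apply (Df (\<gamma> 0)) (\<phi> a) + blinfun_apply (DDf (\<phi> (c' 0))) (\<phi> (c' 0))) (at 0)"
    using bounded_bilinear.has_vector_derivative[OF bounded_bilinear_blinfun_apply _ d\<gamma>']
    by (simp add: o_def)
  ultimately have "deriv (deriv (f \<circ> \<phi> \<circ> c)) 0
      = blinfun_apply (Df (\<phi> y)) (\<phi> a) + blinfun_apply (DDf (\<phi> (c' 0))) (\<phi> (c' 0))"
    using \<gamma>0 by (simp add: DERIV_imp_deriv has_real_derivative_iff_has_vector_derivative)
  moreover have "deriv (deriv (f \<circ> \<phi> \<circ> c)) 0 \<ge> 0" using assms(1,3,4) by (simp add: crit2_def)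
  ultimately show ?thesis by simp
qed

lemma grad_eqI:
  assumes "(f has_derivative (\<lambda>v. inner G v)) (at x)"
  shows "grad f x = G"
  unfolding grad_def
proof (rule the_equality)
  show "(f has_derivative (\<lambda>v. inner G v)) (at x)" by fact
  fix G' assume "(f has_derivative (\<lambda>v. inner G' v)) (at x)"
  then have "(\<lambda>v. inner G' v) = (\<lambda>v. inner G v)" using has_derivative_unique assms by blast
  then have "inner (G' - G) (G' - G) = 0" by (metis inner_diff_left right_minus_eq)
  then show "G' = G" by simp
qed

lemma has_derivative_eq_inner_grad:
  fixes f :: "'a::euclidean_space \<Rightarrow> real"
  assumes "(f has_derivative L) (at x)"
  shows "L = (\<lambda>v. inner (grad f x) v)"
proof -
  have L: "L = (\<lambda>v. inner (adjoint L 1) v)"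
    using adjoint_works[OF has_derivative_linear[OF assms]] by (auto simp: inner_commute)
  then have "grad f x = adjoint L 1" using assms grad_eqI by metis
  with L show ?thesis by simp
qed

section \<open>Critical points of the lifted function\<close>

lemma linear_curve_in_desing:
  assumes "(X, P) \<in> desing r" and "V ** P = 0"
  shows "trig_curve (X, P) (V, 0) 0 0 t \<in> desing r"
proof -
  have "V *v (P *v x) = 0" for x using assms(2) by (simp add: matrix_vector_mul_assoc)
  then show ?thesis
    using assms(1) by (simp add: trig_curve_def desing_iff matrix_vector_mult_add_rdistrib
        scaleR_matrix_vector_assoc[symmetric])
qed

definition plane_rotation :: "'a::real_vector \<Rightarrow> 'a \<Rightarrow> real \<Rightarrow> 'a" where
  "plane_rotation a b \<theta> = cos \<theta> *\<^sub>R a + sin \<theta> *\<^sub>R b"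

lemma inner_plane_rotation:
  fixes a b :: "'a::real_inner"
  assumes aa: "a \<bullet> a = 1" and bb: "b \<bullet> b = 1" and ab: "a \<bullet> b = 0"
  shows "plane_rotation a b \<theta> \<bullet> plane_rotation a b \<theta> = 1"
    and "(plane_rotation a b (2 * \<theta>) - a) \<bullet> plane_rotation a b \<theta> = 0"
proof -
  have ba: "b \<bullet> a = 0" using ab by (simp add: inner_commute)
  show "plane_rotation a b \<theta> \<bullet> plane_rotation a b \<theta> = 1"
    by (simp add: plane_rotation_def inner_add_left inner_add_right aa bb ab ba
        flip: power2_eq_square)
  have "cos (2 * \<theta>) * cos \<theta> + sin (2 * \<theta>) * sin \<theta> = cos \<theta>"
    using cos_diff[of "2 * \<theta>" \<theta>] by simp
  then show "(plane_rotation a b (2 * \<theta>) - a) \<bullet> plane_rotation a b \<theta> = 0"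
    by (simp add: plane_rotation_def inner_add_left inner_add_right inner_diff_left aa bb ab ba
        algebra_simps)
qed

lemma grass_proj_rotate_line:
  assumes P: "P \<in> grass_proj k" and Pa: "P *v a = a" and Pb: "P *v b = 0"
    and a: "norm a = 1" and b: "norm b = 1"
  shows "P - outer a a + outer (plane_rotation a b \<theta>) (plane_rotation a b \<theta>) \<in> grass_proj k"
proof -
  let ?y = "plane_rotation a b \<theta>"
  have aa: "a \<bullet> a = 1" and bb: "b \<bullet> b = 1" using a b by (simp_all add: dot_square_norm)
  have ab: "a \<bullet> b = 0"
    using symmetric_inner_mv[OF grass_projD(1)[OF P], of a b] Pa Pb by simp
  have Q0: "P - outer a a \<in> grass_proj (k - 1)" and k: "0 < k"
    using grass_proj_remove_line[OF P Pa a] by auto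
  have "(P - outer a a) *v ?y = 0"
    by (simp add: plane_rotation_def matrix_vector_mult_diff_rdistrib matrix_vector_right_distrib
        matrix_vector_mult_scaleR Pa Pb aa ab inner_add_right)
  moreover have "norm ?y = 1" using inner_plane_rotation(1)[OF aa bb ab] by (simp add: norm_eq_1)
  ultimately show ?thesis using grass_proj_add_line[OF Q0] k by simp
qed

text \<open>
  The range of P is turned by the angle t/2 in the plane of a and b (see rotation_curve_eq);
  the trigonometric form makes smoothness, velocity and acceleration at t = 0 explicit.
\<close>

definition rotation_curve ::
  "real^'n^'m \<Rightarrow> real^'n^'n \<Rightarrow> real^'n \<Rightarrow> real^'n \<Rightarrow> real^'m \<Rightarrow> real \<Rightarrow> (real^'n^'m) \<times> (real^'n^'n)"
  where "rotation_curve X P a b p = trig_curve (X, P) 0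
     (outer p b - (1/2) *\<^sub>R outer (X *v b) a, (1/2) *\<^sub>R (outer a b + outer b a))
     (- outer p a - (1/2) *\<^sub>R outer (X *v b) b, (1/2) *\<^sub>R (outer b b - outer a a))"

lemma rotation_curve_eq:
  "rotation_curve X P a b p t =
    (X - sin (t / 2) *\<^sub>R outer (X *v b) (plane_rotation a b (t / 2))
        + outer p (plane_rotation a b t - a),
     P - outer a a + outer (plane_rotation a b (t / 2)) (plane_rotation a b (t / 2)))"
proof -
  define c s where "c = cos (t / 2)" and "s = sin (t / 2)"
  have sin_t: "sin t = 2 * s * c" and cos_t: "cos t = 1 - 2 * s\<^sup>2" and cs: "c\<^sup>2 = 1 - s\<^sup>2"
    using sin_double[of "t / 2"] cos_double_sin[of "t / 2"] cos_squared_eq[of "t / 2"]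
    by (simp_all add: c_def s_def mult_ac)
  have "snd (rotation_curve X P a b p t)
      = P - outer a a + outer (c *\<^sub>R a + s *\<^sub>R b) (c *\<^sub>R a + s *\<^sub>R b)"
    using cs by (simp add: rotation_curve_def trig_curve_def sin_t cos_t outer_simps
        algebra_simps power2_eq_square) (metis scaleR_add_left scaleR_one)
  moreover have "fst (rotation_curve X P a b p t)
      = X - s *\<^sub>R outer (X *v b) (c *\<^sub>R a + s *\<^sub>R b) + outer p ((cos t - 1) *\<^sub>R a + sin t *\<^sub>R b)"
    by (simp add: rotation_curve_def trig_curve_def sin_t cos_t outer_simps algebra_simps
        power2_eq_square)
  ultimately show ?thesis
    by (simp add: plane_rotation_def c_def s_def algebra_simps prod_eq_iff)
qed

lemma rotation_curve_in_desing:
  fixes X :: "real^'n^'m"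
  assumes XP: "(X, P) \<in> desing r" and Pa: "P *v a = a" and Pb: "P *v b = 0"
    and a: "norm a = 1" and b: "norm b = 1"
  shows "rotation_curve X P a b p t \<in> desing r"
proof -
  define s y z where "s = sin (t / 2)" and "y = plane_rotation a b (t / 2)"
    and "z = plane_rotation a b t - a"
  let ?R = "P - outer a a" and ?Q = "P - outer a a + outer y y"
  have P: "P \<in> grass_proj (CARD('n) - r)" and XPx: "\<And>x. X *v (P *v x) = 0"
    using XP by (simp_all add: desing_iff)
  have Q: "?Q \<in> grass_proj (CARD('n) - r)"
    unfolding y_def by (rule grass_proj_rotate_line[OF P Pa Pb a b])
  have R: "?R \<in> grass_proj (CARD('n) - r - 1)" by (rule grass_proj_remove_line(1)[OF P Pa a])
  have aa: "a \<bullet> a = 1" and bb: "b \<bullet> b = 1" using a b by (simp_all add: dot_square_norm)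
  have ab: "a \<bullet> b = 0"
    using symmetric_inner_mv[OF grass_projD(1)[OF P], of a b] Pa Pb by simp
  have "?R *v a = 0" "?R *v b = 0"
    by (simp_all add: matrix_vector_mult_diff_rdistrib Pa Pb aa ab)
  then have Ry: "?R *v y = 0" and Rz: "?R *v z = 0"
    by (simp_all add: y_def z_def plane_rotation_def matrix_vector_right_distrib
        matrix_vector_mult_diff_distrib matrix_vector_mult_scaleR)
  have y: "y \<bullet> y = 1" and zy: "z \<bullet> y = 0"
    using inner_plane_rotation[OF aa bb ab, of "t / 2"] by (simp_all add: y_def z_def)
  have "fst (rotation_curve X P a b p t) *v (?Q *v x) = 0" for x
  proof -
    have Qx: "?Q *v x = ?R *v x + (y \<bullet> x) *\<^sub>R y" by (simp add: matrix_vector_mult_add_rdistrib)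
    have R_sym: "w \<bullet> (?R *v x) = (?R *v w) \<bullet> x" for w
      using symmetric_inner_mv[OF grass_projD(1)[OF R]] by simp
    have "X *v (?R *v x) = 0" and "X *v y = s *\<^sub>R (X *v b)"
      using XPx[of a] Pa
      by (simp_all add: XPx y_def s_def plane_rotation_def matrix_vector_mult_diff_rdistrib
          matrix_vector_mult_diff_distrib matrix_vector_right_distrib matrix_vector_mult_scaleR)
    then have "X *v (?Q *v x) = (s * (y \<bullet> x)) *\<^sub>R (X *v b)"
      by (simp add: Qx matrix_vector_right_distrib matrix_vector_mult_scaleR)
    moreover have "y \<bullet> (?Q *v x) = y \<bullet> x" and "z \<bullet> (?Q *v x) = 0"
      by (simp_all add: Qx inner_add_right R_sym Ry Rz y zy)
    ultimately show ?thesis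
      by (simp add: rotation_curve_eq s_def y_def z_def matrix_vector_mult_add_rdistrib
          matrix_vector_mult_diff_rdistrib scaleR_matrix_vector_assoc[symmetric])
  qed
  then show ?thesis using Q by (simp add: rotation_curve_eq desing_iff y_def)
qed

lemma crit1_grad_mult_proj:
  fixes X :: "real^'n^'m"
  assumes XP: "(X, P) \<in> desing r" and crit: "crit1 (desing r) (f \<circ> fst) (X, P)"
    and f: "(f has_derivative (\<lambda>V. inner G V)) (at X)"
  shows "G ** P = G"
proof -
  have f': "(f has_derivative (\<lambda>V. inner G V)) (at (fst (X, P)))" using f by simp
  have P: "P \<in> grass_proj (CARD('n) - r)" using XP by (simp add: desing_iff)
  have Gd: "G *v d = 0" if Pd: "P *v d = 0" for d
  proof -
    let ?V = "outer (G *v d) d"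
    have "?V *v (P *v x) = 0" for x
      using symmetric_inner_mv[OF grass_projD(1)[OF P], of d x] Pd by simp
    then have "?V ** P = 0" by (simp add: matrix_eq matrix_vector_mul_assoc[symmetric])
    then have "inner G ?V = 0"
      using crit1_along_curve[OF crit bounded_linear_fst
          smooth_curve_in_trig_curve[OF linear_curve_in_desing[OF XP]] trig_curve_0
          has_vector_derivative_trig_curve f'] by simp
    then show ?thesis by (simp add: inner_outer)
  qed
  have "G *v x = G *v (P *v x)" for x
    using Gd[of "x - P *v x"] idempotent_mv[OF grass_projD(2)[OF P]]
    by (simp add: matrix_vector_mult_diff_distrib)
  then show ?thesis by (simp add: matrix_eq matrix_vector_mul_assoc[symmetric])
qed

lemma crit1_grad_orthogonal_range:
  fixes X :: "real^'n^'m"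
  assumes XP: "(X, P) \<in> desing r" and crit: "crit1 (desing r) (f \<circ> fst) (X, P)"
    and f: "(f has_derivative (\<lambda>V. inner G V)) (at X)"
    and Pa: "P *v a = a" and Pb: "P *v b = 0"
  shows "(X *v b) \<bullet> (G *v a) = 0"
proof (cases "a = 0 \<or> b = 0")
  case False
  have f': "(f has_derivative (\<lambda>V. inner G V)) (at (fst (X, P)))" using f by simp
  define a' b' where "a' = (1 / norm a) *\<^sub>R a" and "b' = (1 / norm b) *\<^sub>R b"
  have a': "P *v a' = a'" "norm a' = 1" and b': "P *v b' = 0" "norm b' = 1"
    using False Pa Pb by (simp_all add: a'_def b'_def matrix_vector_mult_scaleR)
  note curve = rotation_curve_in_desing[OF XP a'(1) b'(1) a'(2) b'(2), of 0, unfolded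
      rotation_curve_def]
  have "inner G (- (1/2) *\<^sub>R outer (X *v b') a') = 0"
    using crit1_along_curve[OF crit bounded_linear_fst smooth_curve_in_trig_curve[OF curve]
        trig_curve_0
        has_vector_derivative_trig_curve f'] by simp
  then have "(X *v b') \<bullet> (G *v a') = 0" by (simp add: inner_outer)
  then show ?thesis
    using False by (simp add: a'_def b'_def matrix_vector_mult_scaleR)
qed auto

lemma linear_coeff_zero_if_quadratic_nonneg:
  fixes K L :: real
  assumes "\<And>\<beta>. 0 \<le> \<beta>\<^sup>2 * K - \<beta> * L"
  shows "L = 0"
proof -
  define m where "m = \<bar>K\<bar> + 1"
  define \<beta> where "\<beta> = L / m"
  have L: "L = \<beta> * m" by (simp add: \<beta>_def m_def)
  have "0 \<le> \<beta>\<^sup>2 * (K - m)" using assms[of \<beta>] by (simp add: L power2_eq_square algebra_simps)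
  also have "\<dots> \<le> \<beta>\<^sup>2 * (- 1)" by (intro mult_left_mono) (auto simp: m_def)
  finally have "\<beta> = 0" by simp
  then show ?thesis by (simp add: L)
qed

lemma crit2_grad_annihilates_fixed_space:
  fixes X :: "real^'n^'m" and Df :: "real^'n^'m \<Rightarrow> (real^'n^'m) \<Rightarrow>\<^sub>L real"
  assumes XP: "(X, P) \<in> desing r" and crit: "crit2 (desing r) (f \<circ> fst) (X, P)"
    and Df: "\<And>Y. (f has_derivative blinfun_apply (Df Y)) (at Y)"
    and DDf: "(Df has_derivative DDf) (at X)" and G: "blinfun_apply (Df X) = (\<lambda>V. inner G V)"
    and w: "X *v w = 0" "P *v w = 0" "w \<noteq> 0" and Pa: "P *v a = a"
  shows "G *v a = 0"
proof (cases "a = 0")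
  case False
  define a' w' where "a' = (1 / norm a) *\<^sub>R a" and "w' = (1 / norm w) *\<^sub>R w"
  have a': "P *v a' = a'" "norm a' = 1" and w': "X *v w' = 0" "P *v w' = 0" "norm w' = 1"
    using False Pa w by (simp_all add: a'_def w'_def matrix_vector_mult_scaleR)
  \<comment> \<open>along the rotation of a' towards w' with p scaled by \<beta>, the second-order
    condition reads \<beta>^2 K - \<beta> \<langle>G, outer p a'\<rangle> \<ge> 0\<close>
  have "inner G (outer p a') = 0" for p
  proof (rule linear_coeff_zero_if_quadratic_nonneg)
    fix \<beta> :: real
    note curve = rotation_curve_in_desing[OF XP a'(1) w'(2) a'(2) w'(3), of "\<beta> *\<^sub>R p",
        unfolded rotation_curve_def]
    have "0 \<le> blinfun_apply (DDf (\<beta> *\<^sub>R outer p w')) (\<beta> *\<^sub>R outer p w')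
        + inner G (- (\<beta> *\<^sub>R outer p a'))"
      using crit2_along_curve[OF crit bounded_linear_fst smooth_curve_in_trig_curve[OF curve]
          trig_curve_0 has_vector_derivative_trig_curve
              has_vector_derivative_trig_curve_velocity Df]
        DDf G w'(1)
      by (simp add: outer_simps)
    moreover have "DDf (\<beta> *\<^sub>R outer p w') = \<beta> *\<^sub>R DDf (outer p w')"
      by (rule linear_scale[OF has_derivative_linear[OF DDf]])
    ultimately show
      "0 \<le> \<beta>\<^sup>2 * blinfun_apply (DDf (outer p w')) (outer p w') - \<beta> * inner G (outer p a')"
      by (simp add: blinfun.scaleR_left blinfun.scaleR_right power2_eq_square algebra_simps)
  qed
  from this[of "G *v a'"] have "G *v a' = 0" by (simp add: inner_outer)
  then show ?thesis using False by (simp add: a'_def matrix_vector_mult_scaleR)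
qed simp

section \<open>The tangent cone of bounded-rank matrices\<close>

lemma tangent_coneE:
  fixes x :: "'a::real_normed_vector"
  assumes "W \<in> tangent_cone S x"
  obtains Y \<tau> V where "\<And>i. Y i \<in> S" "\<And>i. \<tau> i > 0" "Y \<longlonglongrightarrow> x" "V \<longlonglongrightarrow> W"
    "\<And>i. Y i = x + \<tau> i *\<^sub>R V i"
proof -
  obtain Y \<tau> where Y: "\<And>i. Y i \<in> S" and \<tau>: "\<And>i. \<tau> i > 0" "\<tau> \<longlonglongrightarrow> 0"
    and lim: "(\<lambda>i. (Y i - x) /\<^sub>R \<tau> i) \<longlonglongrightarrow> W"
    using assms unfolding tangent_cone_def by blast
  define V where "V i = (Y i - x) /\<^sub>R \<tau> i" for i
  have Y_eq: "Y i = x + \<tau> i *\<^sub>R V i" for i using \<tau>(1)[of i] by (simp add: V_def)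
  have "(\<lambda>i. x + \<tau> i *\<^sub>R V i) \<longlonglongrightarrow> x + 0 *\<^sub>R W"
    using lim \<tau>(2) by (intro tendsto_intros) (simp_all add: V_def[abs_def])
  then have "Y \<longlonglongrightarrow> x" by (simp add: Y_eq[abs_def])
  moreover have "V \<longlonglongrightarrow> W" using lim by (simp add: V_def[abs_def])
  ultimately show thesis using that Y \<tau>(1) Y_eq by blast
qed

lemma outer_in_tangent_cone:
  assumes "rank X < r"
  shows "outer u v \<in> tangent_cone (low_rank r) X"
  unfolding tangent_cone_def
proof (intro CollectI exI conjI allI)
  let ?\<tau> = "\<lambda>i::nat. inverse (real (Suc i))"
  let ?Y = "\<lambda>i. X + outer (?\<tau> i *\<^sub>R u) v"
  show "?Y i \<in> low_rank r" for i
    using rank_add_le[of X "outer (?\<tau> i *\<^sub>R u) v"] rank_outer_le[of "?\<tau> i *\<^sub>R u" v] assms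
    by (simp add: low_rank_def)
  show "?\<tau> i > 0" for i by simp
  show "?\<tau> \<longlonglongrightarrow> 0" by (rule LIMSEQ_inverse_real_of_nat)
  show "(\<lambda>i. (?Y i - X) /\<^sub>R ?\<tau> i) \<longlonglongrightarrow> outer u v" by (simp add: outer_simps)
qed

lemma zero_if_abs_le_epsilon_mult:
  fixes x C :: real
  assumes "0 \<le> C" and "\<And>e. 0 < e \<Longrightarrow> \<bar>x\<bar> \<le> e * C"
  shows "x = 0"
proof -
  have "\<bar>x\<bar> \<le> 0 + e" if "0 < e" for e
  proof -
    have "\<bar>x\<bar> \<le> e / (C + 1) * C" using assms(1) that by (intro assms(2)) simp
    also have "\<dots> \<le> e" using assms that by (simp add: field_simps)
    finally show ?thesis by simp
  qed
  then show ?thesis using field_le_epsilon[of "\<bar>x\<bar>" 0] by simp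
qed

lemma tangent_cone_full_rank_orthogonal:
  fixes X :: "real^'n^'m"
  assumes XP: "(X, P) \<in> desing r" and r: "r \<le> CARD('n)" "rank X = r"
    and W: "W \<in> tangent_cone (low_rank r) X" and u: "u v* X = 0" and Pv: "P *v v = v"
  shows "u \<bullet> (W *v v) = 0"
proof -
  obtain Y \<tau> V where Y: "\<And>i. Y i \<in> low_rank r" and \<tau>: "\<And>i. \<tau> i > 0"
    and YX: "Y \<longlonglongrightarrow> X" and lim: "V \<longlonglongrightarrow> W" and Y_eq: "\<And>i. Y i = X + \<tau> i *\<^sub>R V i"
    by (rule tangent_coneE[OF W]) blast
  \<comment> \<open>lift Y i to (Y i, Q i) with Q i close to P and use the product of increments\<close>
  have bound: "\<bar>u \<bullet> (W *v v)\<bar> \<le> e * (norm u * norm W * norm v)" if e: "e > 0" for e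
  proof -
    obtain \<delta> where \<delta>: "\<delta> > 0"
      and near: "\<And>Y'. rank Y' \<le> r \<Longrightarrow> dist Y' X < \<delta> \<Longrightarrow> \<exists>Q. (Y', Q) \<in> desing r \<and> dist Q P < e"
      using desing_proj_near_full_rank[OF XP r e] by blast
    have "\<forall>\<^sub>F i in sequentially. dist (Y i) X < \<delta>" using YX \<delta> by (rule tendstoD)
    then have "\<forall>\<^sub>F i in sequentially. \<bar>u \<bullet> (V i *v v)\<bar> \<le> e * (norm u * norm (V i) * norm v)"
    proof eventually_elim
      case (elim i)
      then obtain Q where Q: "(Y i, Q) \<in> desing r" and QP: "dist Q P < e"
        using near Y[of i] by (auto simp: low_rank_def)
      have "u \<bullet> (V i *v v) = u \<bullet> (V i *v ((P - Q) *v v))"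
        using inner_mv_eq_product_of_increments[OF u Pv, of "Y i" Q] Q \<tau>(1)[of i]
        by (simp add: desing_def Y_eq scaleR_matrix_vector_assoc[symmetric])
      also have "\<bar>\<dots>\<bar> \<le> norm u * (norm (V i) * (norm (P - Q) * norm v))"
        by (rule abs_inner_mv_mv_le)
      also have "\<dots> \<le> norm u * (norm (V i) * (e * norm v))"
        using QP by (intro mult_left_mono mult_right_mono) (auto simp: dist_norm norm_minus_commute)
      finally show ?case by (simp add: mult_ac)
    qed
    moreover have "(\<lambda>i. \<bar>u \<bullet> (V i *v v)\<bar>) \<longlonglongrightarrow> \<bar>u \<bullet> (W *v v)\<bar>"
      by (intro tendsto_intros bounded_bilinear.tendsto[OF bounded_bilinear_matrix_vector_mult] lim)
    moreover have "(\<lambda>i. e * (norm u * norm (V i) * norm v)) \<longlonglongrightarrow> e * (norm u * norm W * norm v)"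
      by (intro tendsto_intros lim)
    ultimately show ?thesis by (intro tendsto_le[OF trivial_limit_sequentially]) auto
  qed
  show ?thesis by (rule zero_if_abs_le_epsilon_mult[OF _ bound]) simp
qed

section \<open>Transfer of optimality\<close>

lemma local_to_local_full_rank:
  fixes X :: "real^'n^'m"
  assumes XP: "(X, P) \<in> desing r" and r: "r \<le> CARD('n)" "rank X = r"
  shows "local_to_local (desing r) fst (low_rank r) (X, P)"
  unfolding local_to_local_def
proof (intro allI impI)
  fix f :: "real^'n^'m \<Rightarrow> real"
  assume "loc_min_on (desing r) (f \<circ> fst) (X, P)"
  then obtain e where e: "e > 0" "\<And>z. z \<in> desing r \<Longrightarrow> dist z (X, P) < e \<Longrightarrow> f X \<le> f (fst z)"
    unfolding loc_min_on_def by auto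
  obtain \<delta> where \<delta>: "\<delta> > 0"
    and near: "\<And>Y. rank Y \<le> r \<Longrightarrow> dist Y X < \<delta> \<Longrightarrow> \<exists>Q. (Y, Q) \<in> desing r \<and> dist Q P < e / 2"
    using desing_proj_near_full_rank[OF XP r, of "e / 2"] e(1) by auto
  have "f X \<le> f Z" if "Z \<in> low_rank r" and dZ: "dist Z X < min \<delta> (e / 2)" for Z
  proof -
    have "rank Z \<le> r" "dist Z X < \<delta>" using that by (simp_all add: low_rank_def)
    then obtain Q where Q: "(Z, Q) \<in> desing r" "dist Q P < e / 2" using near by blast
    have "dist (Z, Q) (X, P) \<le> dist Z X + dist Q P"
      using norm_Pair_le[of "Z - X" "Q - P"] by (simp add: dist_norm)
    also have "\<dots> < e" using dZ Q(2) by simp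
    finally show ?thesis using e(2)[OF Q(1)] by simp
  qed
  moreover have "X \<in> low_rank r" using r(2) by (simp add: low_rank_def)
  ultimately show "loc_min_on (low_rank r) f (fst (X, P))"
    unfolding loc_min_on_def using \<delta> e(1) by (auto intro!: exI[of _ "min \<delta> (e / 2)"])
qed

lemma rank_deficient_test_vectors:
  fixes X :: "real^'n^'m"
  assumes "(X, P) \<in> desing r" and "r < CARD('m)" and "r < CARD('n)" and "rank X < r"
  obtains u v where "norm u = 1" "u v* X = 0" "norm v = 1" "P *v v = v"
proof -
  have "rank X < CARD('m)" using assms(2,4) by simp
  moreover have "P \<in> grass_proj (CARD('n) - r)" using assms(1) by (simp add: desing_iff)
  ultimately show ?thesis
    using that exists_unit_left_null_vector exists_unit_fixed_vector assms(3)
    by (meson zero_less_diff)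
qed

lemma loc_min_on_desing_increment_function:
  fixes X :: "real^'n^'m"
  assumes XP: "(X, P) \<in> desing r" and u: "norm u = 1" "u v* X = 0" and v: "norm v = 1" "P *v v = v"
  shows "loc_min_on (desing r) ((\<lambda>Y. (1/2) * norm (Y - X) - u \<bullet> ((Y - X) *v v)) \<circ> fst) (X, P)"
  unfolding loc_min_on_def
proof (intro conjI exI[of _ "1/2"] ballI impI)
  fix z assume z: "z \<in> desing r" "dist z (X, P) < 1/2"
  obtain Y Q where YQ: "z = (Y, Q)" by fastforce
  have PQ: "norm (P - Q) \<le> 1/2"
    using z(2) dist_snd_le[of z "(X, P)"] by (simp add: YQ dist_norm norm_minus_commute)
  have "u \<bullet> ((Y - X) *v v) = u \<bullet> ((Y - X) *v ((P - Q) *v v))"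
    using inner_mv_eq_product_of_increments[OF u(2) v(2)] z(1) by (simp add: YQ desing_def)
  also have "\<dots> \<le> norm u * (norm (Y - X) * (norm (P - Q) * norm v))"
    by (rule order_trans[OF abs_ge_self abs_inner_mv_mv_le])
  also have "\<dots> \<le> (1/2) * norm (Y - X)"
    using mult_left_mono[OF PQ, of "norm (Y - X)"] u(1) v(1) by (simp add: mult.commute)
  finally show "((\<lambda>Y. (1/2) * norm (Y - X) - u \<bullet> ((Y - X) *v v)) \<circ> fst) (X, P)
      \<le> ((\<lambda>Y. (1/2) * norm (Y - X) - u \<bullet> ((Y - X) *v v)) \<circ> fst) z"
    by (simp add: YQ)
qed (use XP in simp_all)

lemma not_loc_min_on_low_rank_increment_function:
  fixes X :: "real^'n^'m"
  assumes rX: "rank X < r" and u: "norm u = 1" and v: "norm v = 1"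
  shows "\<not> loc_min_on (low_rank r) (\<lambda>Y. (1/2) * norm (Y - X) - u \<bullet> ((Y - X) *v v)) X"
proof
  assume "loc_min_on (low_rank r) (\<lambda>Y. (1/2) * norm (Y - X) - u \<bullet> ((Y - X) *v v)) X"
  then obtain e where e: "e > 0"
    and min: "\<And>Z. Z \<in> low_rank r \<Longrightarrow> dist Z X < e \<Longrightarrow> 0 \<le> (1/2) * norm (Z - X) - u \<bullet> ((Z - X) *v v)"
    unfolding loc_min_on_def by fastforce
  define Z where "Z = X + outer ((e/2) *\<^sub>R u) v"
  have "Z \<in> low_rank r"
    using rank_add_le[of X "outer ((e/2) *\<^sub>R u) v"] rank_outer_le[of "(e/2) *\<^sub>R u" v] rX
    by (simp add: low_rank_def Z_def)
  moreover have "norm (Z - X) = e/2" using u v e by (simp add: Z_def norm_outer)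
  moreover have "u \<bullet> ((Z - X) *v v) = e/2"
    using u v by (simp add: Z_def dot_square_norm)
  ultimately show False using min[of Z] e by (simp add: dist_norm)
qed

lemma not_local_to_local_rank_deficient:
  fixes X :: "real^'n^'m"
  assumes XP: "(X, P) \<in> desing r" and r: "r < CARD('m)" "r < CARD('n)" and rX: "rank X < r"
  shows "\<not> local_to_local (desing r) fst (low_rank r) (X, P)"
proof -
  obtain u v where u: "norm u = 1" "u v* X = 0" and v: "norm v = 1" "P *v v = v"
    using rank_deficient_test_vectors[OF assms] .
  have "continuous_on (low_rank r) (\<lambda>Y. (1/2) * norm (Y - X) - u \<bullet> ((Y - X) *v v))"
    by (intro continuous_intros
        bounded_bilinear.continuous_on[OF bounded_bilinear_matrix_vector_mult])
  then show ?thesis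
    using loc_min_on_desing_increment_function[OF XP u v]
        not_loc_min_on_low_rank_increment_function[OF rX u(1) v(1)]
    unfolding local_to_local_def by auto
qed

lemma stationary_if_crit1_full_rank:
  fixes X :: "real^'n^'m"
  assumes XP: "(X, P) \<in> desing r" and r: "r \<le> CARD('n)" "rank X = r"
    and f: "(f has_derivative L) (at X)" and crit: "crit1 (desing r) (f \<circ> fst) (X, P)"
  shows "stationary_on (low_rank r) f X"
proof -
  define G where "G = grad f X"
  have fG: "(f has_derivative (\<lambda>V. inner G V)) (at X)"
    using f has_derivative_eq_inner_grad[OF f] by (simp add: G_def)
  have P: "P \<in> grass_proj (CARD('n) - r)" using XP by (simp add: desing_iff)
  have GP: "G ** P = G" by (rule crit1_grad_mult_proj[OF XP crit fG])
  have "(G *v a) v* X = 0" if Pa: "P *v a = a" for a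
  proof -
    have "(G *v a) \<bullet> (X *v x) = 0" for x
    proof -
      have "X *v x = X *v (x - P *v x)"
        using XP by (simp add: desing_iff matrix_vector_mult_diff_distrib)
      moreover have "P *v (x - P *v x) = 0"
        using idempotent_mv[OF grass_projD(2)[OF P]] by (simp add: matrix_vector_mult_diff_distrib)
      ultimately show ?thesis
        using crit1_grad_orthogonal_range[OF XP crit fG Pa] by (simp add: inner_commute)
    qed
    then show ?thesis by (metis dot_lmul_matrix inner_eq_zero_iff)
  qed
  then have "inner G W = 0" if "W \<in> tangent_cone (low_rank r) X" for W
    using grass_projD[OF P] GP tangent_cone_full_rank_orthogonal[OF XP r that]
    by (intro inner_eq_zero_through_proj) auto
  then show ?thesis by (simp add: stationary_on_def dual_cone_def G_def)
qed

lemma one_to_one_full_rank: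
  fixes X :: "real^'n^'m"
  assumes "(X, P) \<in> desing r" and "r \<le> CARD('n)" and "rank X = r"
  shows "one_to_one (desing r) fst (low_rank r) (X, P)"
  unfolding one_to_one_def
proof (intro allI impI)
  fix f :: "real^'n^'m \<Rightarrow> real"
  assume "\<forall>Y. f differentiable (at Y)" and "crit1 (desing r) (f \<circ> fst) (X, P)"
  then show "stationary_on (low_rank r) f (fst (X, P))"
    using stationary_if_crit1_full_rank[OF assms] by (auto simp: differentiable_def)
qed

lemma crit1_desing_increment_function:
  fixes X :: "real^'n^'m"
  assumes u: "u v* X = 0" and v: "P *v v = v"
  shows "crit1 (desing r) ((\<lambda>Y. u \<bullet> ((Y - X) *v v)) \<circ> fst) (X, P)"
  unfolding crit1_def
proof (intro allI impI, elim conjE)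
  fix c assume c: "smooth_curve_in (desing r) c" and c0: "c 0 = (X, P)"
  then obtain c' where c': "(c has_vector_derivative c') (at 0)" and cM: "\<And>t. c t \<in> desing r"
    unfolding smooth_curve_in_def by (metis One_nat_def)
  let ?B = "\<lambda>(A::real^'n^'m) (B::real^'n^'n). u \<bullet> (A *v (B *v v))"
  have "fst (c t) ** snd (c t) = 0" for t using cM[of t] by (auto simp: desing_def)
  then have "(\<lambda>Y. u \<bullet> ((Y - X) *v v)) \<circ> fst \<circ> c = (\<lambda>t. ?B (fst (c t) - X) (P - snd (c t)))"
    using inner_mv_eq_product_of_increments[OF u v] by (simp add: fun_eq_iff)
  moreover have "((\<lambda>t. ?B (fst (c t) - X) (P - snd (c t))) has_vector_derivative
      ?B (fst (c 0) - X) (0 - snd c') + ?B (fst c' - 0) (P - snd (c 0))) (at 0)"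
    by (intro bounded_bilinear.has_vector_derivative[OF bounded_bilinear_inner_mv_mv]
        has_vector_derivative_diff has_vector_derivative_const
        bounded_linear.has_vector_derivative[OF bounded_linear_fst c']
        bounded_linear.has_vector_derivative[OF bounded_linear_snd c'])
  ultimately have "((\<lambda>Y. u \<bullet> ((Y - X) *v v)) \<circ> fst \<circ> c has_field_derivative 0) (at 0)"
    using c0 by (simp add: has_real_derivative_iff_has_vector_derivative)
  then show "deriv ((\<lambda>Y. u \<bullet> ((Y - X) *v v)) \<circ> fst \<circ> c) 0 = 0" by (rule DERIV_imp_deriv)
qed

lemma has_derivative_increment_function:
  "((\<lambda>Y. u \<bullet> ((Y - X) *v v)) has_derivative (\<lambda>Y. inner (outer u v) Y)) (at Y)"
proof -
  have "(\<lambda>Y. u \<bullet> ((Y - X) *v v)) = (\<lambda>Y. inner (outer u v) Y - inner (outer u v) X)"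
    by (simp add: fun_eq_iff inner_outer inner_commute matrix_vector_mult_diff_rdistrib
        inner_diff_right)
  then show ?thesis
    using has_derivative_diff[OF
        bounded_linear_imp_has_derivative[OF bounded_linear_inner_right] has_derivative_const]
    by simp
qed

lemma not_stationary_on_low_rank_increment_function:
  fixes X :: "real^'n^'m"
  assumes rX: "rank X < r" and u: "norm u = 1" and v: "norm v = 1"
  shows "\<not> stationary_on (low_rank r) (\<lambda>Y. u \<bullet> ((Y - X) *v v)) X"
proof
  assume "stationary_on (low_rank r) (\<lambda>Y. u \<bullet> ((Y - X) *v v)) X"
  moreover have "grad (\<lambda>Y. u \<bullet> ((Y - X) *v v)) X = outer u v"
    by (rule grad_eqI[OF has_derivative_increment_function])
  moreover have "outer (- u) v \<in> tangent_cone (low_rank r) X" by (rule outer_in_tangent_cone[OF rX])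
  ultimately have "0 \<le> inner (outer u v) (outer (- u) v)"
    by (simp add: stationary_on_def dual_cone_def)
  then show False using u v by (simp add: inner_outer_outer dot_square_norm)
qed

lemma not_one_to_one_rank_deficient:
  fixes X :: "real^'n^'m"
  assumes XP: "(X, P) \<in> desing r" and r: "r < CARD('m)" "r < CARD('n)" and rX: "rank X < r"
  shows "\<not> one_to_one (desing r) fst (low_rank r) (X, P)"
proof -
  obtain u v where u: "norm u = 1" "u v* X = 0" and v: "norm v = 1" "P *v v = v"
    using rank_deficient_test_vectors[OF assms] .
  have "\<forall>Y. (\<lambda>Y. u \<bullet> ((Y - X) *v v)) differentiable (at Y)"
    using has_derivative_increment_function[of u X v] by (auto simp: differentiable_def)
  then show ?thesis
    using crit1_desing_increment_function[OF u(2) v(2)]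
      not_stationary_on_low_rank_increment_function[OF rX u(1) v(1)]
    unfolding one_to_one_def by auto
qed

lemma grad_eq_zero_if_crit2_rank_deficient:
  fixes X :: "real^'n^'m" and Df :: "real^'n^'m \<Rightarrow> (real^'n^'m) \<Rightarrow>\<^sub>L real"
  assumes XP: "(X, P) \<in> desing r" and r: "r \<le> CARD('n)" "rank X < r"
    and crit2: "crit2 (desing r) (f \<circ> fst) (X, P)"
    and Df: "\<And>Y. (f has_derivative blinfun_apply (Df Y)) (at Y)"
    and DDf: "(Df has_derivative DDf) (at X)"
  shows "grad f X = 0"
proof -
  define G where "G = grad f X"
  have DfG: "blinfun_apply (Df X) = (\<lambda>V. inner G V)"
    unfolding G_def by (rule has_derivative_eq_inner_grad[OF Df])
  then have fG: "(f has_derivative (\<lambda>V. inner G V)) (at X)" using Df by metis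
  have crit1: "crit1 (desing r) (f \<circ> fst) (X, P)" using crit2 by (simp add: crit2_def)
  obtain w where w: "w \<noteq> 0" "X *v w = 0" "P *v w = 0"
    using exists_common_null_vector[OF XP r] by blast
  have P: "P \<in> grass_proj (CARD('n) - r)" using XP by (simp add: desing_iff)
  have "G *v x = 0" for x
  proof -
    have "G *v x = G *v (P *v x)"
      using crit1_grad_mult_proj[OF XP crit1 fG] by (simp add: matrix_vector_mul_assoc)
    also have "\<dots> = 0"
      using idempotent_mv[OF grass_projD(2)[OF P]]
      by (intro crit2_grad_annihilates_fixed_space[OF XP crit2 Df DDf DfG w(2,3,1)])
    finally show ?thesis .
  qed
  then show ?thesis by (simp add: matrix_eq G_def)
qed

lemma two_to_one_desing:
  fixes X :: "real^'n^'m"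
  assumes XP: "(X, P) \<in> desing r" and r: "r \<le> CARD('n)"
  shows "two_to_one (desing r) fst (low_rank r) (X, P)"
  unfolding two_to_one_def
proof (intro allI impI)
  fix f :: "real^'n^'m \<Rightarrow> real"
  assume "twice_differentiable f" and crit2: "crit2 (desing r) (f \<circ> fst) (X, P)"
  then obtain Df :: "real^'n^'m \<Rightarrow> (real^'n^'m) \<Rightarrow>\<^sub>L real"
    where Df: "\<And>Y. (f has_derivative blinfun_apply (Df Y)) (at Y)" and DDf: "\<And>Y. Df
        differentiable at Y"
    unfolding twice_differentiable_def by blast
  consider "rank X = r" | "rank X < r" using desing_rank_le[OF XP r] by linarith
  then show "stationary_on (low_rank r) f (fst (X, P))"
  proof cases
    case 1
    with crit2 show ?thesis
      using stationary_if_crit1_full_rank[OF XP r 1 Df] by (simp add: crit2_def)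
  next
    case 2
    obtain DDf where "(Df has_derivative DDf) (at X)" using DDf by (auto simp: differentiable_def)
    then have "grad f X = 0" by (rule grad_eq_zero_if_crit2_rank_deficient[OF XP r 2 crit2 Df])
    then show ?thesis by (simp add: stationary_on_def dual_cone_def)
  qed
qed

theorem proposition2p9:
  fixes r :: nat
  assumes "r < CARD('m)" and "r < CARD('n)"
  shows "(\<forall>y \<in> (desing r :: ((real^'n^'m) \<times> (real^'n^'n)) set).
            local_to_local (desing r) fst (low_rank r) y \<longleftrightarrow> rank (fst y) = r)
       \<and> (\<forall>y \<in> (desing r :: ((real^'n^'m) \<times> (real^'n^'n)) set).
            one_to_one (desing r) fst (low_rank r) y \<longleftrightarrow> rank (fst y) = r)
       \<and> (\<forall>y \<in> (desing r :: ((real^'n^'m) \<times> (real^'n^'n)) set).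
            two_to_one (desing r) fst (low_rank r) y)"
proof (intro conjI ballI)
  fix y :: "(real^'n^'m) \<times> (real^'n^'n)"
  assume "y \<in> desing r"
  then obtain X P where y: "y = (X, P)" and XP: "(X, P) \<in> desing r" by (cases y) auto
  have r: "r \<le> CARD('n)" using assms(2) by simp
  consider "rank X = r" | "rank X < r" using desing_rank_le[OF XP r] by linarith
  note cases = this
  show "local_to_local (desing r) fst (low_rank r) y \<longleftrightarrow> rank (fst y) = r"
    using local_to_local_full_rank[OF XP r] not_local_to_local_rank_deficient[OF XP assms]
    by (cases rule: cases) (simp_all add: y)
  show "one_to_one (desing r) fst (low_rank r) y \<longleftrightarrow> rank (fst y) = r"
    using one_to_one_full_rank[OF XP r] not_one_to_one_rank_deficient[OF XP assms]
    by (cases rule: cases) (simp_all add: y)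
  show "two_to_one (desing r) fst (low_rank r) y"
    using two_to_one_desing[OF XP r] by (simp add: y)
qed

end
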